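(* For every positive integer $k$ there is a deterministic algorithm that uses only the ordinal profile and makes no distance queries. On every finite metric space $(X,d)$ and every consistent profile, it returns a set of centers $C\subseteq X$ with $|C|\le 2^{k-1}$ such that $\max_{x\in X} d(x,C)\le 2\cdot\mathrm{OPT}^{\mathrm{center}}_k(X,d)$.
   Context: Ordinal query model: $(X,d)$ is a finite metric space with $|X|=n$. Every point $x\in X$ reports a ranking $\pi_x$ of all points of $X$ such that $y$ is ranked above $y'$ only if $d(x,y)\le d(x,y')$ (ties broken arbitrarily); the collection $P=\{\pi_x\}_{x\in X}$ is a profile consistent with $d$. An algorithm receives $X$, $k$ and $P$ for free. Its only other access to $d$ is by querying the exact value $d(x,y)$ for pairs of its choice; each such value costs one query. For $C\subseteq X$ write $d(x,C)=\min_{c\in C}d(x,c)$. The $k$-center cost of $C$ is $\max_{x\in X}d(x,C)$, and $\mathrm{OPT}^{\mathrm{center}}_k(X,d)=\min_{C\subseteq X,|C|=k}\max_{x\in X}d(x,C)$. *)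

theory Defs
  imports Complex_Main
begin

definition metric_on :: "'a set \<Rightarrow> ('a \<Rightarrow> 'a \<Rightarrow> real) \<Rightarrow> bool" where
  "metric_on X d \<longleftrightarrow>
     (\<forall>x\<in>X. \<forall>y\<in>X. d x y = 0 \<longleftrightarrow> x = y) \<and>
     (\<forall>x\<in>X. \<forall>y\<in>X. d x y = d y x) \<and>
     (\<forall>x\<in>X. \<forall>y\<in>X. \<forall>z\<in>X. d x z \<le> d x y + d y z)"

definition consistent_profile :: "'a set \<Rightarrow> ('a \<Rightarrow> 'a \<Rightarrow> real) \<Rightarrow> ('a \<Rightarrow> 'a list) \<Rightarrow> bool" where
  "consistent_profile X d P \<longleftrightarrow>
     (\<forall>x\<in>X. distinct (P x) \<and> set (P x) = X \<and>
        (\<forall>i j. i < j \<and> j < length (P x) \<longrightarrow> d x (P x ! i) \<le> d x (P x ! j)))"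

definition dist_to_set :: "('a \<Rightarrow> 'a \<Rightarrow> real) \<Rightarrow> 'a \<Rightarrow> 'a set \<Rightarrow> real" where
  "dist_to_set d x C = Min ((\<lambda>c. d x c) ` C)"

definition center_cost :: "'a set \<Rightarrow> ('a \<Rightarrow> 'a \<Rightarrow> real) \<Rightarrow> 'a set \<Rightarrow> real" where
  "center_cost X d C = Max ((\<lambda>x. dist_to_set d x C) ` X)"

definition opt_center :: "'a set \<Rightarrow> ('a \<Rightarrow> 'a \<Rightarrow> real) \<Rightarrow> nat \<Rightarrow> real" where
  "opt_center X d k = Min {center_cost X d C | C. C \<subseteq> X \<and> card C = k}"

end

theory Submission
  imports Defs
begin

text \<open>
  The algorithm only reads the rankings: it splits the points recursively, each point deciding
  for itself which of two pivots it ranks first. Fix an optimal solution C of radius r. For a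
  set S with pivot x, keep the invariant that every point of S lies within 2r of x or within r
  of one of j remaining optimal centres. Let y be the point of S ranked last by x. If
  d x y \<le> 2r, x alone covers S. Otherwise y is within r of a remaining centre c, and S is split
  according to whether a point z ranks x before y. If it does, d z x \<le> d z y, so closeness to c
  gives d z x \<le> 2r; if not, d z y \<le> d z x, and both closeness to c and closeness to x give
  d z y \<le> 2r. Hence both halves, with pivots x and y, satisfy the invariant without c. Starting
  with the centre nearest to the initial pivot removed, k - 1 rounds produce at most 2^(k-1)
  centres covering X within 2r.
\<close>

definition occurs_before :: "'a list \<Rightarrow> 'a \<Rightarrow> 'a \<Rightarrow> bool" where
  "occurs_before L a b \<longleftrightarrow> (\<exists>i j. i \<le> j \<and> j < length L \<and> L!i = a \<and> L!j = b)"

definition farthest_in :: "('a \<Rightarrow> 'a list) \<Rightarrow> 'a \<Rightarrow> 'a set \<Rightarrow> 'a" where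
  "farthest_in P x S = last (filter (\<lambda>z. z \<in> S) (P x))"

fun split_centers :: "('a \<Rightarrow> 'a list) \<Rightarrow> nat \<Rightarrow> 'a set \<Rightarrow> 'a \<Rightarrow> 'a set" where
  "split_centers P 0 S x = {x}"
| "split_centers P (Suc j) S x =
     (if S \<inter> set (P x) = {} then {x} else
      (let y = farthest_in P x S;
           Sx = {z \<in> S. occurs_before (P z) x y}
       in split_centers P j Sx x \<union> split_centers P j (S - Sx) y))"

lemma farthest_in_mem: "S \<inter> set (P x) \<noteq> {} \<Longrightarrow> farthest_in P x S \<in> S"
proof -
  assume "S \<inter> set (P x) \<noteq> {}"
  then have "filter (\<lambda>z. z \<in> S) (P x) \<noteq> []" by (auto simp: filter_empty_conv)
  then show ?thesis unfolding farthest_in_def using last_in_set by fastforce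
qed

lemma split_centers_Suc_nonempty:
  assumes "S \<inter> set (P x) \<noteq> {}"
  shows "split_centers P (Suc j) S x =
    (let y = farthest_in P x S; Sx = {z \<in> S. occurs_before (P z) x y}
     in split_centers P j Sx x \<union> split_centers P j (S - Sx) y)"
  using assms by simp

lemma pivot_in_split_centers: "x \<in> split_centers P j S x"
  by (induction j arbitrary: S) (auto simp: Let_def)

lemma split_centers_subset: "split_centers P j S x \<subseteq> insert x S"
proof (induction j arbitrary: S x)
  case (Suc j)
  show ?case
  proof (cases "S \<inter> set (P x) = {}")
    case False
    then show ?thesis
      using Suc.IH farthest_in_mem[of S P x] unfolding split_centers_Suc_nonempty[of S P x, OF False] Let_def
      by blast
  qed simp
qed simp

lemma card_split_centers_le: "finite S \<Longrightarrow> card (split_centers P j S x) \<le> 2 ^ j"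
proof (induction j arbitrary: S x)
  case (Suc j)
  show ?case
  proof (cases "S \<inter> set (P x) = {}")
    case False
    let ?y = "farthest_in P x S" and ?Sx = "{z \<in> S. occurs_before (P z) x (farthest_in P x S)}"
    have "card (split_centers P (Suc j) S x)
          \<le> card (split_centers P j ?Sx x) + card (split_centers P j (S - ?Sx) ?y)"
      unfolding split_centers_Suc_nonempty[of S P x, OF False] Let_def by (rule card_Un_le)
    also have "\<dots> \<le> 2 ^ Suc j"
      using Suc.IH[of ?Sx x] Suc.IH[of "S - ?Sx" ?y] Suc.prems by simp
    finally show ?thesis .
  qed simp
qed simp

locale metric_with_profile =
  fixes X :: "'a set" and d :: "'a \<Rightarrow> 'a \<Rightarrow> real" and P :: "'a \<Rightarrow> 'a list"
  assumes metric: "metric_on X d" and profile: "consistent_profile X d P"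
begin

lemma dist_commute: "x \<in> X \<Longrightarrow> y \<in> X \<Longrightarrow> d x y = d y x"
  using metric unfolding metric_on_def by blast

lemma dist_triangle: "x \<in> X \<Longrightarrow> y \<in> X \<Longrightarrow> z \<in> X \<Longrightarrow> d x z \<le> d x y + d y z"
  using metric unfolding metric_on_def by blast

lemma set_profile: "x \<in> X \<Longrightarrow> set (P x) = X"
  using profile unfolding consistent_profile_def by blast

lemma sorted_profile: "x \<in> X \<Longrightarrow> sorted_wrt (\<lambda>a b. d x a \<le> d x b) (P x)"
  using profile unfolding consistent_profile_def sorted_wrt_iff_nth_less by blast

lemma dist_le_if_occurs_before:
  assumes "z \<in> X" and "occurs_before (P z) x y"
  shows "d z x \<le> d z y"
proof -
  obtain i j where ij: "i \<le> j" "j < length (P z)" "P z ! i = x" "P z ! j = y"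
    using assms(2) unfolding occurs_before_def by blast
  show ?thesis
  proof (cases "i = j")
    case False
    then show ?thesis
      using sorted_wrt_nth_less[OF sorted_profile[OF assms(1)], of i j] ij by simp
  qed (use ij in simp)
qed

lemma dist_le_if_not_occurs_before:
  assumes "z \<in> X" "x \<in> X" "y \<in> X" and "\<not> occurs_before (P z) x y"
  shows "d z y \<le> d z x"
proof -
  obtain i where i: "i < length (P z)" "P z ! i = x"
    using assms(2) set_profile[OF assms(1)] by (metis in_set_conv_nth)
  obtain j where j: "j < length (P z)" "P z ! j = y"
    using assms(3) set_profile[OF assms(1)] by (metis in_set_conv_nth)
  have "j < i"
  proof (rule ccontr)
    assume "\<not> j < i"
    then have "occurs_before (P z) x y" unfolding occurs_before_def using i j not_less by blast
    with assms(4) show False ..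
  qed
  then show ?thesis
    using sorted_wrt_nth_less[OF sorted_profile[OF assms(1)], of j i] i j by simp
qed

lemma dist_farthest_in:
  assumes "x \<in> X" and "z \<in> S" and "S \<subseteq> X"
  shows "d x z \<le> d x (farthest_in P x S)"
proof -
  let ?L = "filter (\<lambda>z. z \<in> S) (P x)"
  have sorted: "sorted_wrt (\<lambda>a b. d x a \<le> d x b) ?L"
    using sorted_profile[OF assms(1)] by (simp add: sorted_wrt_filter)
  have "z \<in> set ?L"
    using assms set_profile by auto
  moreover obtain L' w where L: "?L = L' @ [w]"
    using calculation by (cases ?L rule: rev_cases) auto
  ultimately have "z \<in> set L' \<or> z = w" by auto
  moreover have "\<forall>a\<in>set L'. d x a \<le> d x w"
    using sorted L by (simp add: sorted_wrt_append)
  ultimately show ?thesis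
    unfolding farthest_in_def L by auto
qed

definition covered_by :: "real \<Rightarrow> 'a \<Rightarrow> 'a set \<Rightarrow> 'a set \<Rightarrow> bool" where
  "covered_by r x Cs S \<longleftrightarrow> (\<forall>z\<in>S. d x z \<le> 2 * r \<or> (\<exists>c\<in>Cs. d z c \<le> r))"

lemma covered_by_pivot_side:
  assumes cov: "covered_by r x Cs S" and "S \<subseteq> X" "x \<in> X" "y \<in> X" "c \<in> X"
    and yc: "d y c \<le> r"
  shows "covered_by r x (Cs - {c}) {z \<in> S. occurs_before (P z) x y}"
  unfolding covered_by_def
proof (intro ballI)
  fix z assume z: "z \<in> {z \<in> S. occurs_before (P z) x y}"
  then have zX: "z \<in> X" using \<open>S \<subseteq> X\<close> by auto
  have "d x z \<le> 2 * r" if zc: "d z c \<le> r"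
  proof -
    have "d x z = d z x" using dist_commute zX \<open>x \<in> X\<close> by simp
    also have "\<dots> \<le> d z y" using dist_le_if_occurs_before zX z by blast
    also have "\<dots> \<le> d z c + d c y" using dist_triangle zX \<open>c \<in> X\<close> \<open>y \<in> X\<close> by blast
    finally show ?thesis using zc yc dist_commute \<open>c \<in> X\<close> \<open>y \<in> X\<close> by simp
  qed
  then show "d x z \<le> 2 * r \<or> (\<exists>c'\<in>Cs - {c}. d z c' \<le> r)"
    using cov z unfolding covered_by_def by blast
qed

lemma covered_by_far_side:
  assumes cov: "covered_by r x Cs S" and "S \<subseteq> X" "x \<in> X" "y \<in> X" "c \<in> X"
    and yc: "d y c \<le> r"
  shows "covered_by r y (Cs - {c}) (S - {z \<in> S. occurs_before (P z) x y})"
  unfolding covered_by_def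
proof (intro ballI)
  fix z assume z: "z \<in> S - {z \<in> S. occurs_before (P z) x y}"
  then have zX: "z \<in> X" using \<open>S \<subseteq> X\<close> by auto
  have closer: "d y z \<le> d x z"
    using dist_le_if_not_occurs_before[OF zX \<open>x \<in> X\<close> \<open>y \<in> X\<close>] z
      dist_commute[OF zX \<open>x \<in> X\<close>] dist_commute[OF zX \<open>y \<in> X\<close>] by auto
  have "d y z \<le> 2 * r" if zc: "d z c \<le> r"
    using dist_triangle[OF \<open>y \<in> X\<close> \<open>c \<in> X\<close> zX] zc yc dist_commute[OF zX \<open>c \<in> X\<close>] by simp
  then show "d y z \<le> 2 * r \<or> (\<exists>c'\<in>Cs - {c}. d z c' \<le> r)"
    using cov z closer unfolding covered_by_def by fastforce
qed

lemma split_centers_cover: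
  assumes "covered_by r x Cs S" and "S \<subseteq> X" "x \<in> X" "Cs \<subseteq> X" "finite Cs" "card Cs \<le> j"
  shows "\<forall>z\<in>S. \<exists>a\<in>split_centers P j S x. d z a \<le> 2 * r"
  using assms
proof (induction j arbitrary: S x Cs)
  case 0
  then have "Cs = {}" by simp
  have "d z x \<le> 2 * r" if "z \<in> S" for z
    using "0.prems"(1) \<open>Cs = {}\<close> that dist_commute[of z x] "0.prems"(2,3)
    unfolding covered_by_def by auto
  then show ?case by simp
next
  case (Suc j)
  show ?case
  proof (cases "S \<inter> set (P x) = {}")
    case True
    then have "S = {}" using Suc.prems(2) set_profile[OF Suc.prems(3)] by blast
    then show ?thesis by simp
  next
    case nonempty: False
    define y where "y = farthest_in P x S"
    define Sx where "Sx = {z \<in> S. occurs_before (P z) x y}"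
    have yX: "y \<in> X" using farthest_in_mem[of S P x, OF nonempty] Suc.prems(2) unfolding y_def by blast
    show ?thesis
    proof (cases "d x y \<le> 2 * r")
      case True
      have "d z x \<le> 2 * r" if "z \<in> S" for z
      proof -
        have "d z x = d x z" using that Suc.prems(2,3) by (intro dist_commute) auto
        also have "\<dots> \<le> d x y" unfolding y_def by (rule dist_farthest_in[OF Suc.prems(3) that Suc.prems(2)])
        finally show ?thesis using True by simp
      qed
      then show ?thesis using pivot_in_split_centers[of x P "Suc j" S] by blast
    next
      case False
      moreover have "y \<in> S" using farthest_in_mem[of S P x, OF nonempty] unfolding y_def .
      ultimately obtain c where c: "c \<in> Cs" "d y c \<le> r"
        using Suc.prems(1) unfolding covered_by_def by auto
      have cX: "c \<in> X" using c(1) Suc.prems(4) by blast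
      have Cs': "Cs - {c} \<subseteq> X" "finite (Cs - {c})" "card (Cs - {c}) \<le> j"
        using Suc.prems(4-6) c(1) by auto
      have "covered_by r x (Cs - {c}) Sx"
        unfolding Sx_def using covered_by_pivot_side[OF Suc.prems(1-3) yX cX c(2)] .
      then have "\<forall>z\<in>Sx. \<exists>a\<in>split_centers P j Sx x. d z a \<le> 2 * r"
        using Suc.IH[OF _ _ Suc.prems(3) Cs'] Suc.prems(2) unfolding Sx_def by blast
      moreover have "covered_by r y (Cs - {c}) (S - Sx)"
        unfolding Sx_def using covered_by_far_side[OF Suc.prems(1-3) yX cX c(2)] .
      then have "\<forall>z\<in>S - Sx. \<exists>a\<in>split_centers P j (S - Sx) y. d z a \<le> 2 * r"
        using Suc.IH[OF _ _ yX Cs'] Suc.prems(2) by blast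
      ultimately show ?thesis
        unfolding split_centers_Suc_nonempty[of S P x, OF nonempty] Let_def y_def[symmetric] Sx_def[symmetric]
        by blast
    qed
  qed
qed

lemma split_centers_cover_from_centers:
  assumes "x \<in> X" "C \<subseteq> X" "finite C" "card C \<le> Suc j" and near: "\<forall>z\<in>X. \<exists>c\<in>C. d z c \<le> r"
  shows "\<forall>z\<in>X. \<exists>a\<in>split_centers P j X x. d z a \<le> 2 * r"
proof -
  obtain c where c: "c \<in> C" "d x c \<le> r" using near \<open>x \<in> X\<close> by blast
  have "covered_by r x (C - {c}) X"
    unfolding covered_by_def
  proof
    fix z assume z: "z \<in> X"
    have "d x z \<le> 2 * r" if "d z c \<le> r"
      using dist_triangle[OF \<open>x \<in> X\<close> _ z, of c] dist_commute[OF z, of c] c that assms(2) by auto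
    then show "d x z \<le> 2 * r \<or> (\<exists>c'\<in>C - {c}. d z c' \<le> r)" using near z by blast
  qed
  moreover have "card (C - {c}) \<le> j" using assms(3,4) c(1) by simp
  ultimately show ?thesis
    using split_centers_cover[of r x "C - {c}" X j] assms by blast
qed

end

lemma opt_center_attained:
  assumes "finite X" "k \<le> card X"
  obtains C where "C \<subseteq> X" "card C = k" "center_cost X d C = opt_center X d k"
proof -
  let ?F = "{center_cost X d C | C. C \<subseteq> X \<and> card C = k}"
  obtain C0 where "C0 \<subseteq> X" "card C0 = k" "finite C0"
    using obtain_subset_with_card_n[OF assms(2)] .
  then have "?F \<noteq> {}" by blast
  moreover have "finite ?F" using assms(1) by simp
  ultimately have "opt_center X d k \<in> ?F" unfolding opt_center_def by (intro Min_in)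
  then obtain C where C: "C \<subseteq> X" "card C = k" "opt_center X d k = center_cost X d C" by blast
  show ?thesis using that[OF C(1,2) C(3)[symmetric]] .
qed

lemma nearest_within_center_cost:
  assumes "finite X" "z \<in> X" "finite C" "C \<noteq> {}"
  shows "\<exists>c\<in>C. d z c \<le> center_cost X d C"
proof -
  have "dist_to_set d z C \<in> (\<lambda>c. d z c) ` C"
    unfolding dist_to_set_def using assms(3,4) by (intro Min_in) auto
  then obtain c where "c \<in> C" "d z c = dist_to_set d z C" by auto
  moreover have "dist_to_set d z C \<le> center_cost X d C"
    unfolding center_cost_def using assms(1,2) by auto
  ultimately show ?thesis by (metis order.refl)
qed

lemma center_cost_le:
  assumes "finite X" "X \<noteq> {}" "finite A" and cover: "\<forall>z\<in>X. \<exists>a\<in>A. d z a \<le> t"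
  shows "center_cost X d A \<le> t"
  unfolding center_cost_def
proof (subst Max_le_iff)
  show "\<forall>v\<in>(\<lambda>z. dist_to_set d z A) ` X. v \<le> t"
  proof
    fix v assume "v \<in> (\<lambda>z. dist_to_set d z A) ` X"
    then obtain z where "z \<in> X" and v: "v = dist_to_set d z A" by blast
    then obtain a where "a \<in> A" "d z a \<le> t" using cover by blast
    moreover have "dist_to_set d z A \<le> d z a"
      unfolding dist_to_set_def using assms(3) \<open>a \<in> A\<close> by simp
    ultimately show "v \<le> t" using v by linarith
  qed
qed (use assms in auto)

theorem mainTheorem2:
  fixes k :: nat
  assumes "k \<ge> 1"
  shows "\<exists>A :: 'a set \<Rightarrow> nat \<Rightarrow> ('a \<Rightarrow> 'a list) \<Rightarrow> 'a set.
           \<forall>(X :: 'a set) (d :: 'a \<Rightarrow> 'a \<Rightarrow> real) P.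
             finite X \<and> k \<le> card X \<and> metric_on X d \<and> consistent_profile X d P \<longrightarrow>
               A X k P \<subseteq> X \<and> A X k P \<noteq> {} \<and> card (A X k P) \<le> 2 ^ (k - 1) \<and>
               center_cost X d (A X k P) \<le> 2 * opt_center X d k"
proof (intro exI allI impI, elim conjE)
  fix X :: "'a set" and d :: "'a \<Rightarrow> 'a \<Rightarrow> real" and P
  assume finX: "finite X" and kX: "k \<le> card X" and "metric_on X d" "consistent_profile X d P"
  then interpret metric_with_profile X d P by unfold_locales
  let ?x = "SOME x. x \<in> X" and ?j = "k - 1"
  have "X \<noteq> {}" using kX assms by auto
  then have xX: "?x \<in> X" by (simp add: some_in_eq)
  let ?A = "split_centers P ?j X ?x"
  have A: "?A \<subseteq> X" "?A \<noteq> {}" "card ?A \<le> 2 ^ ?j"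
    using split_centers_subset[of P ?j X ?x] pivot_in_split_centers[of ?x P ?j X]
      card_split_centers_le[OF finX] xX by auto
  obtain C where C: "C \<subseteq> X" "card C = k" "center_cost X d C = opt_center X d k"
    using opt_center_attained[OF finX kX] by blast
  have "finite C" "C \<noteq> {}" using C finX assms finite_subset by fastforce+
  then have "\<forall>z\<in>X. \<exists>c\<in>C. d z c \<le> opt_center X d k"
    using nearest_within_center_cost[OF finX] C(3) by metis
  then have "\<forall>z\<in>X. \<exists>a\<in>?A. d z a \<le> 2 * opt_center X d k"
    using split_centers_cover_from_centers[OF xX C(1) \<open>finite C\<close>] C(2) assms by simp
  then have "center_cost X d ?A \<le> 2 * opt_center X d k"
    using center_cost_le[OF finX \<open>X \<noteq> {}\<close>] A(1) finX finite_subset by blast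
  with A show "?A \<subseteq> X \<and> ?A \<noteq> {} \<and> card ?A \<le> 2 ^ ?j \<and> center_cost X d ?A \<le> 2 * opt_center X d k"
    by blast
qed

end
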